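(* Let $G$ be a finite simple graph on vertex set $\{x_1,\dots,x_n\}$, let $\Bbbk$ be a field and $S=\Bbbk[x_1,\dots,x_n]$. Let $x$ be a leaf of $G$ with neighbor $y$. Then for all $k\geq 2$, \[I(G)^{[k]}:(xy)=I(G-\{x,y\})^{[k-1]},\] both considered as ideals of $S$.
   Context: A leaf is a vertex of degree $1$. $G-U$ is the induced subgraph on $V(G)\setminus U$. For a graph $H$ with vertices among $x_1,\dots,x_n$ and $k\ge1$, $I(H)^{[k]}$ is the ideal generated by the products $e_1\cdots e_k$ over all matchings $\{e_1,\dots,e_k\}$ of $H$ of size $k$ (edge $\{x_i,x_j\}$ identified with the monomial $x_ix_j$); it is $(0)$ if $k$ exceeds the matching number of $H$. $I:(m)=\{f\in S: fm\in I\}$. *)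

theory Defs
  imports "HOL-Library.Poly_Mapping"
begin

text \<open>Polynomial ring S = k[x_v : v in 'v] over the finite variable type 'v:
  polynomials are finitely supported maps from monomials (exponent vectors) to coefficients.\<close>
type_synonym ('v, 'k) mpoly = "('v \<Rightarrow>\<^sub>0 nat) \<Rightarrow>\<^sub>0 'k"

definition var :: "'v \<Rightarrow> ('v, 'k::comm_semiring_1) mpoly" where
  "var v = Poly_Mapping.single (Poly_Mapping.single v 1) 1"

definition simple_graph :: "'v set set \<Rightarrow> bool" where
  "simple_graph E \<longleftrightarrow> (\<forall>e\<in>E. card e = 2)"

definition degree :: "'v set set \<Rightarrow> 'v \<Rightarrow> nat" where
  "degree E v = card {e\<in>E. v \<in> e}"

definition is_leaf :: "'v set set \<Rightarrow> 'v \<Rightarrow> bool" where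
  "is_leaf E v \<longleftrightarrow> degree E v = 1"

definition delete_vertices :: "'v set set \<Rightarrow> 'v set \<Rightarrow> 'v set set" where
  "delete_vertices E U = {e\<in>E. e \<inter> U = {}}"

definition matching :: "'v set set \<Rightarrow> 'v set set \<Rightarrow> bool" where
  "matching E M \<longleftrightarrow> M \<subseteq> E \<and> (\<forall>e\<in>M. \<forall>f\<in>M. e \<noteq> f \<longrightarrow> e \<inter> f = {})"

definition edge_monomial :: "'v set \<Rightarrow> ('v, 'k::comm_semiring_1) mpoly" where
  "edge_monomial e = (\<Prod>v\<in>e. var v)"

definition ideal_gen :: "'a::comm_ring_1 set \<Rightarrow> 'a set" where
  "ideal_gen A = {f. \<exists>B c. finite B \<and> B \<subseteq> A \<and> f = (\<Sum>b\<in>B. c b * b)}"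

definition colon_ideal :: "'a::comm_ring_1 set \<Rightarrow> 'a \<Rightarrow> 'a set" where
  "colon_ideal I m = {f. f * m \<in> I}"

text \<open>Square-free power I(H)^[k]: generated by products of the edges of k-matchings.
  It is the zero ideal if no such matching exists (ideal_gen of empty set = {0}).\<close>
definition sqfree_power :: "'v set set \<Rightarrow> nat \<Rightarrow> ('v, 'k::comm_ring_1) mpoly set" where
  "sqfree_power E k = ideal_gen
     {(\<Prod>e\<in>M. edge_monomial e) | M. matching E M \<and> finite M \<and> card M = k}"

end

theory Submission
  imports Defs HOL.Modules
begin

text \<open>
  Let u be the exponent of x y, and divide a polynomial by x^u by sending x^(n + u) to x^n and
  dropping the monomials not divisible by x^u. This additive map is a left inverse of
  multiplication by x y, so if f x y = \<Sum> c_M x_M over k-matchings M of G, then f is the sum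
  of the quotients of the c_M x_M. As x is a leaf with neighbour y, at most one edge of M meets
  {x, y}; the other k - 1 edges form a matching M' of G - {x, y} whose monomial is coprime to x y,
  so it passes through the division and every quotient is a multiple of x_M'.
  Conversely, adding the edge {x, y} to a (k - 1)-matching of G - {x, y} gives a k-matching of G.
\<close>

interpretation ring_module: module "(*) :: 'a::comm_ring_1 \<Rightarrow> 'a \<Rightarrow> 'a"
  by unfold_locales (auto simp: algebra_simps)

lemma ideal_gen_eq_span: "ideal_gen A = ring_module.span A"
  unfolding ideal_gen_def ring_module.span_explicit by blast

lemma ideal_gen_base: "a \<in> A \<Longrightarrow> a \<in> ideal_gen A"
  unfolding ideal_gen_eq_span by (rule ring_module.span_base)

lemma ideal_gen_mult: "a \<in> ideal_gen A \<Longrightarrow> r * a \<in> ideal_gen A"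
  unfolding ideal_gen_eq_span by (rule ring_module.span_scale)

lemma ideal_gen_sum: "(\<And>i. i \<in> I \<Longrightarrow> f i \<in> ideal_gen A) \<Longrightarrow> sum f I \<in> ideal_gen A"
  unfolding ideal_gen_eq_span by (rule ring_module.span_sum)

lemma ideal_gen_subset_colon_ideal:
  assumes "\<And>a. a \<in> A \<Longrightarrow> a * m \<in> ideal_gen B"
  shows "ideal_gen A \<subseteq> colon_ideal (ideal_gen B) m"
proof -
  have "ring_module.subspace (colon_ideal (ideal_gen B) m)"
  proof (rule ring_module.subspaceI, unfold colon_ideal_def mem_Collect_eq)
    show "0 * m \<in> ideal_gen B"
      unfolding ideal_gen_eq_span by (simp add: ring_module.span_zero)
  next
    fix a b assume "a * m \<in> ideal_gen B" "b * m \<in> ideal_gen B"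
    then show "(a + b) * m \<in> ideal_gen B"
      unfolding ideal_gen_eq_span distrib_right by (rule ring_module.span_add)
  next
    fix c a assume "a * m \<in> ideal_gen B"
    then show "c * a * m \<in> ideal_gen B"
      unfolding mult.assoc by (rule ideal_gen_mult)
  qed
  with assms show ?thesis
    unfolding ideal_gen_eq_span by (intro ring_module.span_minimal) (auto simp: colon_ideal_def)
qed

lemma lookup_mult_single_one:
  "Poly_Mapping.lookup (p * Poly_Mapping.single w (1::'k::comm_semiring_1)) n =
     (\<Sum>m. Poly_Mapping.lookup p m when n = m + w)"
proof -
  have "(\<Sum>q. (1::'k) when w = q \<and> n = m + q) = (1 when n = m + w)" for m
    using Sum_any_when_equal'[of "\<lambda>q. (1::'k) when n = m + q" w]
    by (simp add: when_when conj_commute)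
  then show ?thesis
    by (simp add: lookup_mult lookup_single when_when mult_when)
qed

lemma lookup_mult_single_one_add:
  fixes p :: "'a::cancel_comm_monoid_add \<Rightarrow>\<^sub>0 'k::comm_semiring_1"
  shows "Poly_Mapping.lookup (p * Poly_Mapping.single w 1) (n + w) = Poly_Mapping.lookup p n"
proof -
  have "n + w = m + w \<longleftrightarrow> m = n" for m
    by auto
  then show ?thesis
    by (simp add: lookup_mult_single_one)
qed

lemma lookup_mult_single_one_not_dvd:
  "\<nexists>m. n = m + w \<Longrightarrow> Poly_Mapping.lookup (p * Poly_Mapping.single w (1::'k::comm_semiring_1)) n = 0"
  by (simp add: lookup_mult_single_one)

definition div_monomial :: "('v \<Rightarrow>\<^sub>0 nat) \<Rightarrow> ('v, 'k::zero) mpoly \<Rightarrow> ('v, 'k) mpoly" where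
  "div_monomial u p = Abs_poly_mapping (\<lambda>n. Poly_Mapping.lookup p (n + u))"

lemma lookup_div_monomial:
  "Poly_Mapping.lookup (div_monomial u p) n = Poly_Mapping.lookup p (n + u)"
proof -
  have "{n. Poly_Mapping.lookup p (n + u) \<noteq> 0} \<subseteq> (\<lambda>m. m - u) ` Poly_Mapping.keys p"
    by (auto simp: in_keys_iff intro!: image_eqI)
  then have "finite {n. Poly_Mapping.lookup p (n + u) \<noteq> 0}"
    by (rule finite_subset) simp
  then show ?thesis
    unfolding div_monomial_def by simp
qed

lemma div_monomial_sum:
  "div_monomial u (\<Sum>i\<in>I. f i) = (\<Sum>i\<in>I. div_monomial u (f i))"
  by (rule poly_mapping_eqI) (simp add: lookup_div_monomial lookup_sum)

lemma div_monomial_mult_monomial: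
  "div_monomial u (p * Poly_Mapping.single u 1) = (p :: ('v, 'k::comm_semiring_1) mpoly)"
  by (rule poly_mapping_eqI) (simp add: lookup_div_monomial lookup_mult_single_one_add)

lemma exponent_dvd_cancel_coprime:
  fixes n m u w :: "'v \<Rightarrow>\<^sub>0 nat"
  assumes "Poly_Mapping.keys u \<inter> Poly_Mapping.keys w = {}" and "n + u = m + w"
  shows "n = (n - w) + w"
proof (rule poly_mapping_eqI)
  fix v
  have "Poly_Mapping.lookup n v + Poly_Mapping.lookup u v = Poly_Mapping.lookup m v + Poly_Mapping.lookup w v"
    using assms(2) by (metis lookup_add)
  moreover have "Poly_Mapping.lookup u v = 0 \<or> Poly_Mapping.lookup w v = 0"
    using assms(1) by (auto simp: in_keys_iff)
  ultimately show "Poly_Mapping.lookup n v = Poly_Mapping.lookup (n - w + w) v"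
    by (auto simp: lookup_add lookup_minus)
qed

lemma div_monomial_mult_coprime:
  fixes p :: "('v, 'k::comm_semiring_1) mpoly"
  assumes "Poly_Mapping.keys u \<inter> Poly_Mapping.keys w = {}"
  shows "div_monomial u (p * Poly_Mapping.single w 1) = div_monomial u p * Poly_Mapping.single w 1"
proof (rule poly_mapping_eqI)
  fix n
  show "Poly_Mapping.lookup (div_monomial u (p * Poly_Mapping.single w 1)) n =
        Poly_Mapping.lookup (div_monomial u p * Poly_Mapping.single w 1) n"
  proof (cases "\<exists>m. n = m + w")
    case True
    then obtain m where n: "n = m + w" by blast
    have "Poly_Mapping.lookup (div_monomial u (p * Poly_Mapping.single w 1)) n =
          Poly_Mapping.lookup (p * Poly_Mapping.single w 1) ((m + u) + w)"
      by (simp add: lookup_div_monomial n ac_simps)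
    also have "\<dots> = Poly_Mapping.lookup p (m + u)"
      by (rule lookup_mult_single_one_add)
    also have "\<dots> = Poly_Mapping.lookup (div_monomial u p * Poly_Mapping.single w 1) n"
      by (simp add: n lookup_mult_single_one_add lookup_div_monomial)
    finally show ?thesis .
  next
    case False
    then have "\<nexists>m. n + u = m + w"
      using exponent_dvd_cancel_coprime[OF assms] by blast
    with False show ?thesis
      by (simp add: lookup_div_monomial lookup_mult_single_one_not_dvd)
  qed
qed

text \<open>Division by a monomial is additive but not linear over the ring, hence the hypothesis
  covers all multiples of the generators.\<close>

lemma div_monomial_mem_ideal_gen:
  assumes "\<And>b c. b \<in> B \<Longrightarrow> div_monomial u (c * b) \<in> ideal_gen A" and "p \<in> ideal_gen B"
  shows "div_monomial u p \<in> ideal_gen A"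
proof -
  from \<open>p \<in> ideal_gen B\<close> obtain B' c where "B' \<subseteq> B" and "p = (\<Sum>b\<in>B'. c b * b)"
    unfolding ideal_gen_def by blast
  then show ?thesis
    using assms(1) by (auto simp: div_monomial_sum intro!: ideal_gen_sum)
qed

definition set_exponent :: "'v set \<Rightarrow> 'v \<Rightarrow>\<^sub>0 nat" where
  "set_exponent A = (\<Sum>v\<in>A. Poly_Mapping.single v 1)"

lemma keys_set_exponent: "Poly_Mapping.keys (set_exponent A) \<subseteq> A"
proof -
  have "(\<Union>v\<in>A. Poly_Mapping.keys (Poly_Mapping.single v (1::nat))) = A"
    by simp
  then show ?thesis
    unfolding set_exponent_def using keys_sum[of "\<lambda>v. Poly_Mapping.single v (1::nat)" A] by simp
qed

lemma prod_single_one: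
  "(\<Prod>i\<in>I. Poly_Mapping.single (f i) (1::'k::comm_semiring_1)) = Poly_Mapping.single (\<Sum>i\<in>I. f i) 1"
  by (induction I rule: infinite_finite_induct) (auto simp: mult_single)

lemma edge_monomial_eq_single: "edge_monomial e = Poly_Mapping.single (set_exponent e) 1"
  unfolding edge_monomial_def var_def set_exponent_def by (rule prod_single_one)

lemma prod_edge_monomials:
  "(\<Prod>e\<in>M. edge_monomial e) = Poly_Mapping.single (\<Sum>e\<in>M. set_exponent e) 1"
  unfolding edge_monomial_eq_single by (rule prod_single_one)

lemma keys_sum_set_exponent: "Poly_Mapping.keys (\<Sum>e\<in>M. set_exponent e) \<subseteq> \<Union>M"
proof -
  have "Poly_Mapping.keys (\<Sum>e\<in>M. set_exponent e) \<subseteq> (\<Union>e\<in>M. Poly_Mapping.keys (set_exponent e))"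
    by (rule keys_sum)
  also have "\<dots> \<subseteq> \<Union>M"
    by (meson UN_least Union_upper keys_set_exponent subset_trans)
  finally show ?thesis .
qed

lemma matching_disjoint:
  "matching E M \<Longrightarrow> e \<in> M \<Longrightarrow> f \<in> M \<Longrightarrow> e \<noteq> f \<Longrightarrow> e \<inter> f = {}"
  unfolding matching_def by simp

lemma matching_subset: "matching E M \<Longrightarrow> M' \<subseteq> M \<Longrightarrow> matching E M'"
  unfolding matching_def by (meson subsetD subset_trans)

lemma matching_delete_vertices_iff:
  "matching (delete_vertices E U) M \<longleftrightarrow> matching E M \<and> (\<forall>e\<in>M. e \<inter> U = {})"
  unfolding matching_def delete_vertices_def by auto

lemma matching_insert_edge:
  assumes "e \<in> E" and "matching (delete_vertices E e) M"
  shows "matching E (insert e M)"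
  using assms unfolding matching_def delete_vertices_def by (auto simp: Int_commute)

lemma leaf_edges:
  assumes "is_leaf E x" and "{x, y} \<in> E"
  shows "{e\<in>E. x \<in> e} = {{x, y}}"
proof -
  have "card {e\<in>E. x \<in> e} = 1"
    using assms(1) unfolding is_leaf_def degree_def .
  then obtain a where a: "{e\<in>E. x \<in> e} = {a}"
    by (rule card_1_singletonE)
  moreover have "{x, y} \<in> {e\<in>E. x \<in> e}"
    using assms(2) by simp
  ultimately show ?thesis
    by simp
qed

lemma matching_meets_leaf_edge_at_most_once:
  assumes "is_leaf E x" and "{x, y} \<in> E" and "matching E M"
    and "e \<in> M" "e \<inter> {x, y} \<noteq> {}" and "f \<in> M" "f \<inter> {x, y} \<noteq> {}"
  shows "e = f"
proof -
  have y_mem: "y \<in> g" if "g \<in> M" "g \<inter> {x, y} \<noteq> {}" for g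
  proof (cases "x \<in> g")
    case True
    with \<open>g \<in> M\<close> \<open>matching E M\<close> have "g \<in> {e\<in>E. x \<in> e}"
      unfolding matching_def by auto
    then show ?thesis
      using leaf_edges[OF assms(1,2)] by simp
  next
    case False
    with that(2) show ?thesis
      by auto
  qed
  have "e \<inter> f \<noteq> {}"
    using y_mem[OF assms(4,5)] y_mem[OF assms(6,7)] by auto
  then show ?thesis
    using matching_disjoint[OF assms(3,4,6)] by auto
qed

lemma matching_avoiding_leaf_edge:
  assumes "is_leaf E x" and "{x, y} \<in> E" and "matching E M" and "finite M"
  obtains M' where "M' \<subseteq> M" "card M' = card M - 1" "matching (delete_vertices E {x, y}) M'"
proof -
  define N where "N = {e\<in>M. e \<inter> {x, y} \<noteq> {}}"
  have "N \<subseteq> M" "finite N"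
    using \<open>finite M\<close> by (auto simp: N_def)
  have "card N \<le> Suc 0"
    unfolding card_le_Suc0_iff_eq[OF \<open>finite N\<close>]
  proof (intro ballI)
    fix e f assume "e \<in> N" "f \<in> N"
    then show "e = f"
      unfolding N_def mem_Collect_eq
      by (elim conjE) (rule matching_meets_leaf_edge_at_most_once[OF assms(1-3)])
  qed
  then have "card M - 1 \<le> card (M - N)"
    using card_Diff_subset[OF \<open>finite N\<close> \<open>N \<subseteq> M\<close>] by simp
  then obtain M' where "M' \<subseteq> M - N" "card M' = card M - 1"
    by (rule obtain_subset_with_card_n)
  moreover have "matching (delete_vertices E {x, y}) M'"
    unfolding matching_delete_vertices_iff
  proof
    show "matching E M'"
      using \<open>M' \<subseteq> M - N\<close> by (intro matching_subset[OF \<open>matching E M\<close>]) blast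
    show "\<forall>e\<in>M'. e \<inter> {x, y} = {}"
      using \<open>M' \<subseteq> M - N\<close> unfolding N_def by auto
  qed
  ultimately show ?thesis
    using that by auto
qed

lemma edge_monomial_mult_mem_sqfree_power:
  assumes "e \<in> E" "e \<noteq> {}" and "matching (delete_vertices E e) N" "finite N"
  shows "(\<Prod>f\<in>N. edge_monomial f) * edge_monomial e \<in> sqfree_power E (Suc (card N))"
proof -
  have "e \<notin> N"
    using assms(2,3) unfolding matching_delete_vertices_iff by blast
  then have "(\<Prod>f\<in>N. edge_monomial f) * edge_monomial e = (\<Prod>f\<in>insert e N. edge_monomial f)"
    using \<open>finite N\<close> by (simp add: mult.commute)
  moreover have "matching E (insert e N)" "card (insert e N) = Suc (card N)"
    using matching_insert_edge[OF assms(1,3)] \<open>e \<notin> N\<close> \<open>finite N\<close> by simp_all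
  ultimately show ?thesis
    unfolding sqfree_power_def using \<open>finite N\<close> by (intro ideal_gen_base) auto
qed

lemma div_leaf_edge_mult_matching_mem_sqfree_power:
  fixes c :: "('v, 'k::comm_ring_1) mpoly"
  assumes "is_leaf E x" and "{x, y} \<in> E" and "matching E M" and "finite M"
  shows "div_monomial (set_exponent {x, y}) (c * (\<Prod>e\<in>M. edge_monomial e))
           \<in> sqfree_power (delete_vertices E {x, y}) (card M - 1)"
proof -
  obtain M' where M': "M' \<subseteq> M" "card M' = card M - 1" "matching (delete_vertices E {x, y}) M'"
    using matching_avoiding_leaf_edge[OF assms] .
  let ?u = "set_exponent {x, y}"
  define w where "w = (\<Sum>e\<in>M'. set_exponent e)"
  have M'_monomial: "(\<Prod>e\<in>M'. edge_monomial e) = Poly_Mapping.single w (1::'k)"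
    unfolding w_def by (rule prod_edge_monomials)
  have "Poly_Mapping.keys w \<subseteq> \<Union>M'"
    unfolding w_def by (rule keys_sum_set_exponent)
  moreover have "\<Union>M' \<inter> {x, y} = {}"
    using M'(3) unfolding matching_delete_vertices_iff by blast
  ultimately have coprime: "Poly_Mapping.keys ?u \<inter> Poly_Mapping.keys w = {}"
    using keys_set_exponent[of "{x, y}"] by blast
  have "(\<Prod>e\<in>M'. edge_monomial e) \<in> sqfree_power (delete_vertices E {x, y}) (card M - 1)"
    unfolding sqfree_power_def using M' finite_subset[OF _ \<open>finite M\<close>] by (intro ideal_gen_base) blast
  have "div_monomial ?u (c * (\<Prod>e\<in>M. edge_monomial e))
      = div_monomial ?u (c * (\<Prod>e\<in>M - M'. edge_monomial e) * Poly_Mapping.single w 1)"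
    unfolding prod.subset_diff[OF M'(1) \<open>finite M\<close>] M'_monomial by (simp only: mult.assoc)
  also have "\<dots> = div_monomial ?u (c * (\<Prod>e\<in>M - M'. edge_monomial e)) * Poly_Mapping.single w 1"
    by (rule div_monomial_mult_coprime[OF coprime])
  also have "\<dots> = div_monomial ?u (c * (\<Prod>e\<in>M - M'. edge_monomial e)) * (\<Prod>e\<in>M'. edge_monomial e)"
    unfolding M'_monomial ..
  also have "\<dots> \<in> sqfree_power (delete_vertices E {x, y}) (card M - 1)"
    using \<open>(\<Prod>e\<in>M'. edge_monomial e) \<in> _\<close> unfolding sqfree_power_def by (rule ideal_gen_mult)
  finally show ?thesis .
qed

lemma sqfree_power_delete_edge_subset_colon_ideal:
  assumes "e \<in> E" "e \<noteq> {}" and "k \<ge> 1"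
  shows "sqfree_power (delete_vertices E e) (k - 1)
           \<subseteq> colon_ideal (sqfree_power E k) (edge_monomial e :: ('v, 'k::comm_ring_1) mpoly)"
proof -
  have "b * edge_monomial e \<in> sqfree_power E k"
    if "b \<in> {\<Prod>f\<in>N. edge_monomial f | N. matching (delete_vertices E e) N \<and> finite N \<and> card N = k - 1}"
    for b :: "('v, 'k) mpoly"
  proof -
    from that obtain N where "b = (\<Prod>f\<in>N. edge_monomial f)"
      and N: "matching (delete_vertices E e) N" "finite N" "card N = k - 1"
      by blast
    then have "b * edge_monomial e \<in> sqfree_power E (Suc (card N))"
      using edge_monomial_mult_mem_sqfree_power[OF assms(1,2) N(1,2)] by simp
    with N(3) \<open>k \<ge> 1\<close> show ?thesis
      by simp
  qed
  then show ?thesis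
    unfolding sqfree_power_def by (rule ideal_gen_subset_colon_ideal)
qed

lemma colon_ideal_leaf_edge_subset_sqfree_power:
  assumes "is_leaf E x" and "{x, y} \<in> E"
  shows "colon_ideal (sqfree_power E k) (edge_monomial {x, y} :: ('v, 'k::comm_ring_1) mpoly)
           \<subseteq> sqfree_power (delete_vertices E {x, y}) (k - 1)"
proof
  let ?u = "set_exponent {x, y}"
  have generator_div: "div_monomial ?u (c * b) \<in> sqfree_power (delete_vertices E {x, y}) (k - 1)"
    if "b \<in> {\<Prod>e\<in>M. edge_monomial e | M. matching E M \<and> finite M \<and> card M = k}"
    for b c :: "('v, 'k) mpoly"
  proof -
    from that obtain M where "b = (\<Prod>e\<in>M. edge_monomial e)"
      and M: "matching E M" "finite M" "card M = k"
      by blast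
    then show ?thesis
      using div_leaf_edge_mult_matching_mem_sqfree_power[OF assms M(1,2)] by simp
  qed
  fix f :: "('v, 'k) mpoly"
  assume "f \<in> colon_ideal (sqfree_power E k) (edge_monomial {x, y})"
  then have "f * Poly_Mapping.single ?u 1 \<in> sqfree_power E k"
    unfolding colon_ideal_def edge_monomial_eq_single by simp
  with generator_div have "div_monomial ?u (f * Poly_Mapping.single ?u 1) \<in> sqfree_power (delete_vertices E {x, y}) (k - 1)"
    unfolding sqfree_power_def by (rule div_monomial_mem_ideal_gen)
  then show "f \<in> sqfree_power (delete_vertices E {x, y}) (k - 1)"
    by (simp add: div_monomial_mult_monomial)
qed

theorem lemma4p4:
  fixes E :: "('v::finite) set set" and x y :: 'v and k :: nat
  assumes "simple_graph E"
    and "is_leaf E x"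
    and "{x, y} \<in> E"
    and "k \<ge> 2"
  shows "colon_ideal (sqfree_power E k :: ('v, 'k::field) mpoly set) (var x * var y)
           = sqfree_power (delete_vertices E {x, y}) (k - 1)"
proof -
  have "x \<noteq> y"
    using assms(1,3) unfolding simple_graph_def by fastforce
  then have xy: "var x * var y = (edge_monomial {x, y} :: ('v, 'k) mpoly)"
    by (simp add: edge_monomial_def)
  have "k \<ge> 1"
    using assms(4) by simp
  show ?thesis
    unfolding xy
  proof (rule subset_antisym)
    show "colon_ideal (sqfree_power E k) (edge_monomial {x, y}) \<subseteq> sqfree_power (delete_vertices E {x, y}) (k - 1)"
      by (rule colon_ideal_leaf_edge_subset_sqfree_power[OF assms(2,3)])
    show "sqfree_power (delete_vertices E {x, y}) (k - 1) \<subseteq> colon_ideal (sqfree_power E k) (edge_monomial {x, y})"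
      by (rule sqfree_power_delete_edge_subset_colon_ideal[OF assms(3) _ \<open>k \<ge> 1\<close>]) simp
  qed
qed

end
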